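(* Let $V,W$ be real inner product spaces of dimension $2$ and $3$ respectively. For $\epsilon\ge0$ and $L\in\mathrm{Hom}(V,W)$ set $q_\epsilon(L)=\operatorname{tr}\sqrt{\epsilon^2\mathbb 1+L^*L}$. Then: (a) $q_\epsilon(L)=\sqrt{\operatorname{tr}(\epsilon^2\mathbb 1+L^*L)+2\sqrt{\det(\epsilon^2\mathbb 1+L^*L)}}$ for all $L$; consequently $q_\epsilon$ is smooth for $\epsilon>0$. (b) $q_\epsilon$ is convex for every $\epsilon\ge0$. (c) Let $L\in\mathrm{Hom}(V,W)$, let $A:W\to W$ be nonnegative self-adjoint and let $\epsilon\ge0$, assuming moreover that $L$ has rank $2$ if $\epsilon=0$. Then $\frac{d}{dt}q_\epsilon((\mathbb 1+tA)L)\big|_{t=0}\ge0$, with strict inequality if $A\circ L\neq0$.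
   Context: $L^*$ denotes the adjoint of $L$; $\mathbb 1$ is the identity of $V$. *)

theory Defs
  imports "HOL-Analysis.Analysis"
begin

text \<open>Hom(V,W) with V = R^2, W = R^3 (standard inner products) is represented by
  real 3x2 matrices; the adjoint is the transpose.\<close>

definition psd_matrix :: "real^'n^'n \<Rightarrow> bool" where
  "psd_matrix M \<longleftrightarrow> transpose M = M \<and> (\<forall>x. 0 \<le> x \<bullet> (M *v x))"

definition psd_sqrt :: "real^'n^'n \<Rightarrow> real^'n^'n" where
  "psd_sqrt M = (THE S. psd_matrix S \<and> S ** S = M)"

definition q_eps :: "real \<Rightarrow> real^2^3 \<Rightarrow> real" where
  "q_eps \<epsilon> L = trace (psd_sqrt (\<epsilon>\<^sup>2 *\<^sub>R mat 1 + transpose L ** L))"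

text \<open>C-infinity smoothness of a real-valued function on a finite-dimensional space:
  f belongs to a family of everywhere (Frechet) differentiable functions closed under
  taking directional derivatives; equivalently all iterated derivatives exist
  everywhere.\<close>
definition C_infinity :: "('a::real_normed_vector \<Rightarrow> real) \<Rightarrow> bool" where
  "C_infinity f \<longleftrightarrow> (\<exists>S. f \<in> S \<and> (\<forall>g\<in>S. (\<forall>x. g differentiable (at x)) \<and>
      (\<forall>v. (\<lambda>x. frechet_derivative g (at x) v) \<in> S)))"

end

theory Submission
  imports Defs
begin

text \<open>The matrix \<open>\<epsilon>\<^sup>2 1 + L\<^sup>* L\<close> is the Gram matrix of the two columns \<open>c, d\<close> of
  \<open>[\<epsilon> 1; L]\<close>, so \<open>q\<^sub>\<epsilon>(L)\<close> is the trace norm of that \<open>5 \<times> 2\<close> matrix. By Cayley-Hamilton, the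
  psd square root of a psd \<open>2 \<times> 2\<close> matrix \<open>M\<close> is \<open>(M + \<surd>det M 1) / \<surd>(tr M + 2 \<surd>det M)\<close>; taking
  the trace gives (a), and for \<open>\<epsilon> > 0\<close> the formula is a composition of polynomials and square roots
  of positive functions, hence smooth. The trace norm is the maximum of \<open>u \<bullet> c + v \<bullet> d\<close> over
  orthonormal pairs \<open>u, v\<close>, attained at the polar factor when \<open>c, d\<close> are independent, which holds
  for \<open>\<epsilon> \<noteq> 0\<close>; so \<open>q\<^sub>\<epsilon>\<close> is a maximum of linear functions of \<open>L\<close> and thus convex, and \<open>q\<^sub>0\<close> is
  convex as the pointwise limit. For (c), the derivative along \<open>(1 + t A) L\<close> is explicit and its
  sign reduces to the mixed discriminant inequality for the Gram matrix of \<open>c, d\<close> and the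
  quadratic form of \<open>A\<close>.\<close>

section \<open>Positive semidefinite matrices and square roots in dimension two\<close>

lemma nonneg_binary_quadratic_iff:
  fixes p r w :: real
  shows "(\<forall>x y. 0 \<le> p*x^2 + 2*r*x*y + w*y^2) \<longleftrightarrow> 0 \<le> p \<and> 0 \<le> w \<and> r^2 \<le> p*w"
proof
  assume q: "\<forall>x y. 0 \<le> p*x^2 + 2*r*x*y + w*y^2"
  have p: "0 \<le> p" and w: "0 \<le> w" using q[rule_format, of 1 0] q[rule_format, of 0 1] by simp_all
  have "0 \<le> p*(p*w - r^2)" "0 \<le> w*(p*w - r^2)" "0 \<le> p - 2*r^2 + w*r^2"
    using q[rule_format, of r "-p"] q[rule_format, of w "-r"] q[rule_format, of 1 "-r"]
    by (simp_all add: power2_eq_square algebra_simps)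
  then have "r^2 \<le> p*w"
    using p w by (cases "p = 0 \<and> w = 0") (auto simp: zero_le_mult_iff power2_eq_square)
  with p w show "0 \<le> p \<and> 0 \<le> w \<and> r^2 \<le> p*w" by simp
next
  assume a: "0 \<le> p \<and> 0 \<le> w \<and> r^2 \<le> p*w"
  show "\<forall>x y. 0 \<le> p*x^2 + 2*r*x*y + w*y^2"
  proof (intro allI)
    fix x y :: real
    show "0 \<le> p*x^2 + 2*r*x*y + w*y^2"
    proof (cases "p = 0")
      case True
      then have "r = 0" using a by simp
      then show ?thesis using True a by simp
    next
      case False
      have "p*(p*x^2 + 2*r*x*y + w*y^2) = (p*x + r*y)^2 + (p*w - r^2)*y^2"
        by (simp add: power2_eq_square algebra_simps)
      also have "\<dots> \<ge> 0" using a by simp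
      finally show ?thesis using False a by (simp add: zero_le_mult_iff)
    qed
  qed
qed

lemma mat2_eq_iff:
  "(A::'a^2^2) = B \<longleftrightarrow> A$1$1 = B$1$1 \<and> A$1$2 = B$1$2 \<and> A$2$1 = B$2$1 \<and> A$2$2 = B$2$2"
  by (auto simp: vec_eq_iff forall_2)

lemma matrix_matrix_mult2_nth: "(A ** B)$i$j = A$i$1*B$1$j + A$i$2*B$2$j"
  for A B :: "'a::comm_semiring_1^2^2"
  by (simp add: matrix_matrix_mult_def sum_2)

lemma trace2: "trace (A::'a::semiring_1^2^2) = A$1$1 + A$2$2"
  by (simp add: trace_def sum_2)

lemma quadratic_form2:
  "x \<bullet> (M *v x) = M$1$1*(x$1)^2 + (M$1$2+M$2$1)*x$1*x$2 + M$2$2*(x$2)^2"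
  for M :: "real^2^2"
  by (simp add: inner_vec_def matrix_vector_mult_def sum_2 power2_eq_square algebra_simps)

lemma psd_matrix2_iff: "psd_matrix (M::real^2^2) \<longleftrightarrow>
   M$1$2 = M$2$1 \<and> 0 \<le> M$1$1 \<and> 0 \<le> M$2$2 \<and> (M$1$2)^2 \<le> M$1$1*M$2$2"
proof -
  have "transpose M = M \<longleftrightarrow> M$1$2 = M$2$1"
    by (auto simp: mat2_eq_iff transpose_def)
  moreover have "(\<forall>x. 0 \<le> x \<bullet> (M *v x)) \<longleftrightarrow> (\<forall>x y. 0 \<le> M$1$1*x^2 + 2*(M$1$2)*x*y + M$2$2*y^2)"
    if "M$1$2 = M$2$1"
  proof
    assume "\<forall>x. 0 \<le> x \<bullet> (M *v x)"
    then show "\<forall>x y. 0 \<le> M$1$1*x^2 + 2*(M$1$2)*x*y + M$2$2*y^2"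
      using that by (metis (no_types) quadratic_form2 mult_2 vector_2)
  qed (use that in \<open>simp add: quadratic_form2\<close>)
  ultimately show ?thesis
    unfolding psd_matrix_def nonneg_binary_quadratic_iff[symmetric] by blast
qed

lemma matrix2_cayley_hamilton: "M ** M = trace M *\<^sub>R M - det M *\<^sub>R mat 1"
  for M :: "real^2^2"
  by (simp add: mat2_eq_iff matrix_matrix_mult2_nth trace2 det_2 mat_def algebra_simps)

lemma psd_matrix2_trace_det:
  assumes "psd_matrix (S::real^2^2)"
  shows "0 \<le> trace S" and "0 \<le> det S" and "trace S = 0 \<Longrightarrow> S = 0"
proof -
  have S: "S$2$1 = S$1$2" "0 \<le> S$1$1" "0 \<le> S$2$2" "(S$1$2)^2 \<le> S$1$1*S$2$2"
    using assms unfolding psd_matrix2_iff by auto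
  then show "0 \<le> trace S" "0 \<le> det S"
    by (simp_all add: trace2 det_2 power2_eq_square)
  show "S = 0" if "trace S = 0"
  proof -
    have "S$1$1 = 0" "S$2$2 = 0" using that S by (auto simp: trace2)
    then show ?thesis using S by (simp add: mat2_eq_iff)
  qed
qed

text \<open>Since \<open>1 / 0 = 0\<close>, the formula for \<open>S\<close> also covers \<open>S = 0\<close>, so a psd square root
  of \<open>M\<close> is determined by \<open>M\<close>.\<close>
lemma psd_matrix2_square_root_eq:
  fixes S M :: "real^2^2"
  assumes S: "psd_matrix S" and SS: "S ** S = M"
  shows "trace S = sqrt (trace M + 2 * sqrt (det M))"
    and "S = (1 / trace S) *\<^sub>R (M + sqrt (det M) *\<^sub>R mat 1)"
proof -
  note S_nonneg = psd_matrix2_trace_det[OF S]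
  have detM: "sqrt (det M) = det S"
    using S_nonneg(2) by (simp flip: SS add: det_mul)
  have CH: "M + det S *\<^sub>R mat 1 = trace S *\<^sub>R S"
    using matrix2_cayley_hamilton[of S] by (simp add: SS)
  have "trace M + 2 * det S = (trace S)^2"
    using arg_cong[OF CH, of trace] by (simp add: trace2 mat_def power2_eq_square algebra_simps)
  then show "trace S = sqrt (trace M + 2 * sqrt (det M))"
    using S_nonneg(1) by (simp add: detM)
  show "S = (1 / trace S) *\<^sub>R (M + sqrt (det M) *\<^sub>R mat 1)"
    using S_nonneg(3) by (cases "trace S = 0") (simp_all add: detM CH)
qed

lemma matrix2_shift_square:
  fixes M :: "real^2^2"
  assumes "\<delta>^2 = det M"
  shows "(M + \<delta> *\<^sub>R mat 1) ** (M + \<delta> *\<^sub>R mat 1) = (trace M + 2 * \<delta>) *\<^sub>R M"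
  using assms
  by (simp add: mat2_eq_iff matrix_matrix_mult2_nth trace2 det_2 mat_def power2_eq_square algebra_simps)

lemma psd_matrix2_has_square_root:
  fixes M :: "real^2^2"
  assumes M: "psd_matrix M"
  shows "\<exists>S. psd_matrix S \<and> S ** S = M"
proof -
  define \<delta> where "\<delta> = sqrt (det M)"
  define s where "s = sqrt (trace M + 2 * \<delta>)"
  define S where "S = (1 / s) *\<^sub>R (M + \<delta> *\<^sub>R mat 1)"
  note M_nonneg = psd_matrix2_trace_det[OF M]
  have \<delta>: "0 \<le> \<delta>" "\<delta>^2 = det M" using M_nonneg by (simp_all add: \<delta>_def)
  have s: "0 \<le> s" "s^2 = trace M + 2 * \<delta>" using M_nonneg \<delta> by (simp_all add: s_def)
  have m: "M$2$1 = M$1$2" "0 \<le> M$1$1" "0 \<le> M$2$2" "(M$1$2)^2 \<le> M$1$1*M$2$2"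
    using M unfolding psd_matrix2_iff by auto
  have "M$1$1 * M$2$2 \<le> (M$1$1 + \<delta>) * (M$2$2 + \<delta>)"
    using m \<delta> by (intro mult_mono) auto
  then have "(M$1$2)^2 \<le> (M$1$1 + \<delta>) * (M$2$2 + \<delta>)"
    using m(4) by linarith
  then have "(M$1$2 / s)^2 \<le> ((M$1$1 + \<delta>) / s) * ((M$2$2 + \<delta>) / s)"
    by (simp add: power_divide divide_right_mono power2_eq_square)
  then have "psd_matrix S"
    unfolding psd_matrix2_iff S_def using m \<delta> s by (simp add: mat_def)
  moreover have "S ** S = M"
  proof (cases "s = 0")
    case True
    then have "M = 0" using M_nonneg \<delta> s by simp
    then show ?thesis using True by (simp add: S_def)
  next
    case False
    have "S ** S = (1 / s^2) *\<^sub>R ((M + \<delta> *\<^sub>R mat 1) ** (M + \<delta> *\<^sub>R mat 1))"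
      by (simp add: S_def matrix_scalar_ac flip: scalar_matrix_assoc) (simp add: power2_eq_square)
    also have "\<dots> = M" using False by (simp add: matrix2_shift_square \<delta> flip: s(2))
    finally show ?thesis .
  qed
  ultimately show ?thesis by blast
qed

lemma psd_sqrt2:
  fixes M :: "real^2^2"
  assumes "psd_matrix M"
  shows "psd_matrix (psd_sqrt M)" and "psd_sqrt M ** psd_sqrt M = M"
proof -
  have "\<exists>!S. psd_matrix S \<and> S ** S = M"
    using psd_matrix2_has_square_root[OF assms] psd_matrix2_square_root_eq by metis
  then have "psd_matrix (psd_sqrt M) \<and> psd_sqrt M ** psd_sqrt M = M"
    unfolding psd_sqrt_def by (rule theI')
  then show "psd_matrix (psd_sqrt M)" "psd_sqrt M ** psd_sqrt M = M" by simp_all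
qed

lemma trace_psd_sqrt2:
  fixes M :: "real^2^2"
  assumes "psd_matrix M"
  shows "trace (psd_sqrt M) = sqrt (trace M + 2 * sqrt (det M))"
  using psd_matrix2_square_root_eq psd_sqrt2[OF assms] by blast

lemma inner_matrix_vector_symmetric:
  fixes A :: "real^'n^'n"
  assumes "transpose A = A"
  shows "(A *v x) \<bullet> y = x \<bullet> (A *v y)"
  by (metis assms dot_lmul_matrix vector_transpose_matrix)

lemma psd_matrix_cauchy_schwarz:
  fixes A :: "real^'n^'n"
  assumes A: "psd_matrix A"
  shows "(u \<bullet> (A *v v))^2 \<le> (u \<bullet> (A *v u)) * (v \<bullet> (A *v v))"
proof -
  have sym: "v \<bullet> (A *v u) = u \<bullet> (A *v v)"
    using A inner_matrix_vector_symmetric[of A v u]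
    by (simp add: psd_matrix_def inner_commute)
  have "0 \<le> (u \<bullet> (A *v u)) * s^2 + 2*(u \<bullet> (A *v v)) * s*t + (v \<bullet> (A *v v))*t^2" for s t
  proof -
    have "0 \<le> (s *\<^sub>R u + t *\<^sub>R v) \<bullet> (A *v (s *\<^sub>R u + t *\<^sub>R v))"
      using A unfolding psd_matrix_def by blast
    also have "\<dots> = (u \<bullet> (A *v u)) * s^2 + 2*(u \<bullet> (A *v v)) * s*t + (v \<bullet> (A *v v))*t^2"
      using sym by (simp add: matrix_vector_right_distrib matrix_vector_mult_scaleR inner_add_left
          inner_add_right power2_eq_square algebra_simps)
    finally show ?thesis .
  qed
  then show ?thesis
    using nonneg_binary_quadratic_iff[of "u \<bullet> (A *v u)" "u \<bullet> (A *v v)" "v \<bullet> (A *v v)"] by blast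
qed

lemma psd_matrix_quadratic_form_eq_0:
  fixes A :: "real^'n^'n"
  assumes A: "psd_matrix A" and "u \<bullet> (A *v u) = 0"
  shows "A *v u = 0"
proof -
  have "(u \<bullet> (A *v (A *v u)))^2 \<le> 0"
    using psd_matrix_cauchy_schwarz[OF A, of u "A *v u"] assms(2) by simp
  moreover have "u \<bullet> (A *v (A *v u)) = (A *v u) \<bullet> (A *v u)"
    using A inner_matrix_vector_symmetric unfolding psd_matrix_def by metis
  ultimately show ?thesis by simp
qed

section \<open>The trace norm of a pair of vectors\<close>

definition gram_det :: "'a::real_inner \<Rightarrow> 'a \<Rightarrow> real" where
  "gram_det c d = (c \<bullet> c) * (d \<bullet> d) - (c \<bullet> d)^2"

text \<open>The trace norm (sum of the singular values) of the map \<open>(x, y) \<mapsto> x c + y d\<close>.\<close>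
definition trace_norm2 :: "'a::real_inner \<Rightarrow> 'a \<Rightarrow> real" where
  "trace_norm2 c d = sqrt (c \<bullet> c + d \<bullet> d + 2 * sqrt (gram_det c d))"

lemma gram_det_nonneg: "0 \<le> gram_det c d"
  using Cauchy_Schwarz_ineq[of c d] by (simp add: gram_det_def)

lemma mixed_discriminant2_nonneg:
  fixes a11 a22 a12 b11 b22 b12 :: real
  assumes "0 \<le> a11" "0 \<le> a22" "a12^2 \<le> a11*a22" "0 \<le> b11" "0 \<le> b22" "b12^2 \<le> b11*b22"
  shows "2*a12*b12 \<le> a11*b22 + a22*b11"
proof -
  have "(a12*b12)^2 \<le> (a11*b22)*(a22*b11)"
    using mult_mono[OF assms(3) assms(6)] assms by (simp add: power_mult_distrib mult_ac)
  also have "4 * \<dots> \<le> (a11*b22 + a22*b11)^2"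
    using zero_le_power2[of "a11*b22 - a22*b11"] by (simp add: power2_eq_square algebra_simps)
  finally have "(2*a12*b12)^2 \<le> (a11*b22 + a22*b11)^2" by (simp add: power_mult_distrib)
  moreover have "0 \<le> a11*b22 + a22*b11" using assms by (simp add: add_nonneg_nonneg)
  ultimately show ?thesis by (rule power2_le_imp_le)
qed

lemma gram_det_orthogonal_add_ge:
  fixes a b c d :: "'a::real_inner"
  assumes "a \<bullet> c = 0" "a \<bullet> d = 0" "b \<bullet> c = 0" "b \<bullet> d = 0"
  shows "gram_det a b \<le> gram_det (a + c) (b + d)"
proof -
  have "2 * (a \<bullet> b) * (c \<bullet> d) \<le> (a \<bullet> a) * (d \<bullet> d) + (b \<bullet> b) * (c \<bullet> c)"
    using Cauchy_Schwarz_ineq[of a b] Cauchy_Schwarz_ineq[of c d]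
    by (intro mixed_discriminant2_nonneg) simp_all
  moreover have "gram_det (a + c) (b + d) = gram_det a b
      + ((a \<bullet> a) * (d \<bullet> d) + (b \<bullet> b) * (c \<bullet> c) - 2 * (a \<bullet> b) * (c \<bullet> d)) + gram_det c d"
    using assms
    by (simp add: gram_det_def inner_add_left inner_add_right inner_commute power2_eq_square algebra_simps)
  ultimately show ?thesis using gram_det_nonneg[of c d] by linarith
qed

lemma inner_orthonormal_le_trace_norm2:
  fixes u v c d :: "'a::real_inner"
  assumes uu: "u \<bullet> u = 1" and vv: "v \<bullet> v = 1" and uv: "u \<bullet> v = 0"
  shows "u \<bullet> c + v \<bullet> d \<le> trace_norm2 c d"
proof -
  define x z y w where "x = u \<bullet> c" "z = v \<bullet> c" "y = u \<bullet> d" "w = v \<bullet> d"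
  define a b where "a = x *\<^sub>R u + z *\<^sub>R v" "b = y *\<^sub>R u + w *\<^sub>R v"
  have vu: "v \<bullet> u = 0" using uv by (simp add: inner_commute)
  have proj: "a \<bullet> (c - a) = 0" "a \<bullet> (d - b) = 0" "b \<bullet> (c - a) = 0" "b \<bullet> (d - b) = 0"
    using uu vv uv vu by (simp_all add: a_b_def x_z_y_w_def inner_diff_right inner_add_left
        inner_add_right inner_commute algebra_simps)
  have aa: "a \<bullet> a = x^2 + z^2" and bb: "b \<bullet> b = y^2 + w^2" and ab: "gram_det a b = (x*w - z*y)^2"
    using uu vv uv vu by (simp_all add: a_b_def gram_det_def inner_add_left inner_add_right
        power2_eq_square algebra_simps)
  have "c \<bullet> c = a \<bullet> a + (c - a) \<bullet> (c - a)" "d \<bullet> d = b \<bullet> b + (d - b) \<bullet> (d - b)"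
    using proj by (simp_all add: inner_diff_left inner_diff_right inner_commute)
  then have cc: "x^2 + z^2 \<le> c \<bullet> c" and dd: "y^2 + w^2 \<le> d \<bullet> d"
    by (simp_all add: aa bb)
  have "(x*w - z*y)^2 \<le> gram_det c d"
    using gram_det_orthogonal_add_ge[OF proj] ab by simp
  then have xw: "x*w - z*y \<le> sqrt (gram_det c d)"
    by (rule real_le_rsqrt)
  have "(x + w)^2 + (y - z)^2 = (x^2 + z^2) + (y^2 + w^2) + 2 * (x*w - z*y)"
    by (simp add: power2_eq_square algebra_simps)
  then have "(x + w)^2 \<le> c \<bullet> c + d \<bullet> d + 2 * sqrt (gram_det c d)"
    using cc dd xw zero_le_power2[of "y - z"] by argo
  then have "x + w \<le> trace_norm2 c d"
    unfolding trace_norm2_def by (rule real_le_rsqrt)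
  then show ?thesis by (simp add: x_z_y_w_def)
qed

lemma inner_scaleR_add_scaleR:
  fixes c d :: "'a::real_inner"
  shows "(a *\<^sub>R c + b *\<^sub>R d) \<bullet> (a' *\<^sub>R c + b' *\<^sub>R d)
     = a * a' * (c \<bullet> c) + (a * b' + b * a') * (c \<bullet> d) + b * b' * (d \<bullet> d)"
  by (simp add: inner_add_left inner_add_right inner_commute algebra_simps)

text \<open>\<open>u\<close> and \<open>v\<close> are the columns of the polar factor \<open>X |X|\<^sup>-\<^sup>1\<close> of \<open>X = [c d]\<close>, where
  \<open>|X| = (G + \<delta> 1) / s\<close> is the square root of the Gram matrix \<open>G\<close> of \<open>c, d\<close>.\<close>
lemma trace_norm2_attained:
  fixes c d :: "'a::real_inner"
  assumes G: "0 < gram_det c d"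
  obtains u v where "u \<bullet> u = 1" "v \<bullet> v = 1" "u \<bullet> v = 0" "u \<bullet> c + v \<bullet> d = trace_norm2 c d"
proof -
  define p w r where "p = c \<bullet> c" "w = d \<bullet> d" "r = c \<bullet> d"
  define \<delta> where "\<delta> = sqrt (p * w - r^2)"
  define s where "s = sqrt (p + w + 2 * \<delta>)"
  have \<delta>: "0 < \<delta>" "r^2 = p * w - \<delta>^2" using G by (simp_all add: \<delta>_def p_w_r_def gram_det_def)
  have s: "0 < s" "s^2 = p + w + 2 * \<delta>"
    using \<delta> by (simp_all add: s_def p_w_r_def add_nonneg_pos)
  have norm_eq: "trace_norm2 c d = s" by (simp add: trace_norm2_def gram_det_def s_def \<delta>_def p_w_r_def)
  define k where "k = s * \<delta>"
  have k: "k \<noteq> 0" "k^2 = \<delta>^2 * s^2" using s \<delta> by (simp_all add: k_def power_mult_distrib)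
  define u where "u = ((w + \<delta>) / k) *\<^sub>R c + (- r / k) *\<^sub>R d"
  define v where "v = (- r / k) *\<^sub>R c + ((p + \<delta>) / k) *\<^sub>R d"
  have "u \<bullet> u = ((w + \<delta>)^2 * p - 2 * (w + \<delta>) * r^2 + r^2 * w) / k^2"
    using k(1) unfolding u_def inner_scaleR_add_scaleR
    by (simp add: field_simps power2_eq_square flip: p_w_r_def)
  also have "(w + \<delta>)^2 * p - 2 * (w + \<delta>) * r^2 + r^2 * w = k^2"
    unfolding k(2) s(2) \<delta>(2) by (simp add: power2_eq_square algebra_simps)
  finally have uu: "u \<bullet> u = 1" using k(1) by simp
  have "v \<bullet> v = ((p + \<delta>)^2 * w - 2 * (p + \<delta>) * r^2 + r^2 * p) / k^2"
    using k(1) unfolding v_def inner_scaleR_add_scaleR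
    by (simp add: field_simps power2_eq_square flip: p_w_r_def)
  also have "(p + \<delta>)^2 * w - 2 * (p + \<delta>) * r^2 + r^2 * p = k^2"
    unfolding k(2) s(2) \<delta>(2) by (simp add: power2_eq_square algebra_simps)
  finally have vv: "v \<bullet> v = 1" using k(1) by simp
  have "u \<bullet> v = r * (r^2 + \<delta>^2 - p * w) / k^2"
    using k(1) unfolding u_def v_def inner_scaleR_add_scaleR
    by (simp add: field_simps power2_eq_square flip: p_w_r_def)
  then have uv: "u \<bullet> v = 0" by (simp add: \<delta>)
  have "u \<bullet> c + v \<bullet> d = ((w + \<delta>) * p - r^2 + (p + \<delta>) * w - r^2) / k"
    using k(1) unfolding u_def v_def
    by (simp add: inner_diff_right inner_commute field_simps power2_eq_square flip: p_w_r_def)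
  also have "\<dots> = s"
    using k s \<delta> by (simp add: k_def field_simps power2_eq_square)
  finally show ?thesis using that uu vv uv norm_eq by simp
qed

lemma trace_norm2_convex_combination:
  fixes c1 c2 d1 d2 :: "'a::real_inner" and t :: real
  defines "c \<equiv> (1 - t) *\<^sub>R c1 + t *\<^sub>R c2" and "d \<equiv> (1 - t) *\<^sub>R d1 + t *\<^sub>R d2"
  assumes t: "0 \<le> t" "t \<le> 1" and G: "0 < gram_det c d"
  shows "trace_norm2 c d \<le> (1 - t) * trace_norm2 c1 d1 + t * trace_norm2 c2 d2"
proof -
  obtain u v where uv: "u \<bullet> u = 1" "v \<bullet> v = 1" "u \<bullet> v = 0"
    and attained: "u \<bullet> c + v \<bullet> d = trace_norm2 c d"
    using trace_norm2_attained[OF G] by blast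
  have "trace_norm2 c d = (1 - t) * (u \<bullet> c1 + v \<bullet> d1) + t * (u \<bullet> c2 + v \<bullet> d2)"
    unfolding attained[symmetric] by (simp add: c_def d_def inner_add_right algebra_simps)
  also have "\<dots> \<le> (1 - t) * trace_norm2 c1 d1 + t * trace_norm2 c2 d2"
    using t inner_orthonormal_le_trace_norm2[OF uv] by (intro add_mono mult_left_mono) auto
  finally show ?thesis .
qed

lemma trace_norm2_line_has_derivative:
  fixes c d h k :: "'a::real_inner"
  assumes G: "0 < gram_det c d"
  shows "((\<lambda>t. trace_norm2 (c + t *\<^sub>R h) (d + t *\<^sub>R k)) has_real_derivative
     (c \<bullet> h + d \<bullet> k + ((c \<bullet> h) * (d \<bullet> d) + (c \<bullet> c) * (d \<bullet> k) - (c \<bullet> d) * (c \<bullet> k + h \<bullet> d))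
       / sqrt (gram_det c d)) / trace_norm2 c d) (at 0)"
proof -
  have inner_line: "(a + t *\<^sub>R a') \<bullet> (b + t *\<^sub>R b') = a \<bullet> b + t * (a \<bullet> b' + a' \<bullet> b) + t^2 * (a' \<bullet> b')"
    for a a' b b' :: 'a and t :: real
    by (simp add: inner_add_left inner_add_right power2_eq_square algebra_simps)
  have pos: "0 < c \<bullet> c + d \<bullet> d + 2 * sqrt (gram_det c d)"
    using G by (simp add: add_nonneg_pos)
  show ?thesis
    using G pos unfolding trace_norm2_def gram_det_def inner_line
    by (auto intro!: derivative_eq_intros) (simp add: inner_commute field_simps)
qed

lemma convex_on_tendsto:
  fixes f :: "'i \<Rightarrow> 'a::real_vector \<Rightarrow> real"
  assumes F: "F \<noteq> bot" and convex: "eventually (\<lambda>i. convex_on S (f i)) F"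
    and lim: "\<And>x. x \<in> S \<Longrightarrow> ((\<lambda>i. f i x) \<longlongrightarrow> g x) F"
  shows "convex_on S g"
proof (rule convex_onI)
  show S: "convex S"
    using eventually_happens'[OF F convex] convex_on_imp_convex by blast
  fix t :: real and x y
  assume t: "0 < t" "t < 1" and xy: "x \<in> S" "y \<in> S"
  from convex have "eventually (\<lambda>i. f i ((1 - t) *\<^sub>R x + t *\<^sub>R y) \<le> (1 - t) * f i x + t * f i y) F"
    by (rule eventually_mono) (use t xy in \<open>simp add: convex_onD\<close>)
  moreover have "((\<lambda>i. f i ((1 - t) *\<^sub>R x + t *\<^sub>R y)) \<longlongrightarrow> g ((1 - t) *\<^sub>R x + t *\<^sub>R y)) F"
    using S t xy by (intro lim) (simp add: convexD)
  moreover have "((\<lambda>i. (1 - t) * f i x + t * f i y) \<longlongrightarrow> (1 - t) * g x + t * g y) F"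
    using xy by (intro tendsto_intros lim)
  ultimately show "g ((1 - t) *\<^sub>R x + t *\<^sub>R y) \<le> (1 - t) * g x + t * g y"
    using tendsto_le[OF F] by blast
qed

section \<open>A class of smooth functions\<close>

text \<open>\<open>inverse_sqrt\<close> is included because it occurs in the derivative of \<open>sqrt \<circ> f\<close>.\<close>
inductive_set elementary_smooth :: "('a::real_normed_vector \<Rightarrow> real) set" where
  const: "(\<lambda>x. c) \<in> elementary_smooth"
| linear: "bounded_linear f \<Longrightarrow> f \<in> elementary_smooth"
| add: "f \<in> elementary_smooth \<Longrightarrow> g \<in> elementary_smooth \<Longrightarrow> (\<lambda>x. f x + g x) \<in> elementary_smooth"
| mult: "f \<in> elementary_smooth \<Longrightarrow> g \<in> elementary_smooth \<Longrightarrow> (\<lambda>x. f x * g x) \<in> elementary_smooth"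
| sqrt: "f \<in> elementary_smooth \<Longrightarrow> (\<forall>x. 0 < f x) \<Longrightarrow> (\<lambda>x. sqrt (f x)) \<in> elementary_smooth"
| inverse_sqrt: "f \<in> elementary_smooth \<Longrightarrow> (\<forall>x. 0 < f x) \<Longrightarrow>
    (\<lambda>x. inverse (sqrt (f x))) \<in> elementary_smooth"

lemma elementary_smooth_diff:
  "f \<in> elementary_smooth \<Longrightarrow> g \<in> elementary_smooth \<Longrightarrow> (\<lambda>x. f x - g x) \<in> elementary_smooth"
  using elementary_smooth.add[OF _ elementary_smooth.mult[OF elementary_smooth.const, of g "-1"]]
  by simp

lemma elementary_smooth_sum:
  assumes "finite I" "\<And>i. i \<in> I \<Longrightarrow> f i \<in> elementary_smooth"
  shows "(\<lambda>x. \<Sum>i\<in>I. f i x) \<in> elementary_smooth"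
  using assms by (induction I rule: finite_induct) (auto intro: elementary_smooth.const elementary_smooth.add)

lemma DERIV_inverse_sqrt:
  assumes "0 < y"
  shows "((\<lambda>y. inverse (sqrt y)) has_real_derivative
     inverse (sqrt y) * inverse (sqrt y) * inverse (sqrt y) * (-1/2)) (at y)"
  using assms
  by (auto intro!: derivative_eq_intros simp: field_simps power2_eq_square)

lemma elementary_smooth_has_derivative:
  assumes "f \<in> elementary_smooth"
  shows "\<exists>f'. (\<forall>x. (f has_derivative f' x) (at x)) \<and> (\<forall>v. (\<lambda>x. f' x v) \<in> elementary_smooth)"
  using assms
proof induction
  case (const c)
  show ?case
    by (rule exI[of _ "\<lambda>x h. 0"]) (auto intro: elementary_smooth.const)
next
  case (linear f)
  then have "(f has_derivative f) (at x)" for x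
    by (rule bounded_linear_imp_has_derivative)
  then show ?case
    by (intro exI[of _ "\<lambda>x. f"]) (auto intro: elementary_smooth.const)
next
  case (add f g)
  then obtain F G where F: "\<And>x. (f has_derivative F x) (at x)" "\<And>v. (\<lambda>x. F x v) \<in> elementary_smooth"
    and G: "\<And>x. (g has_derivative G x) (at x)" "\<And>v. (\<lambda>x. G x v) \<in> elementary_smooth" by blast
  show ?case
    by (intro exI[of _ "\<lambda>x h. F x h + G x h"] conjI allI has_derivative_add elementary_smooth.add F G)
next
  case (mult f g)
  then obtain F G where F: "\<And>x. (f has_derivative F x) (at x)" "\<And>v. (\<lambda>x. F x v) \<in> elementary_smooth"
    and G: "\<And>x. (g has_derivative G x) (at x)" "\<And>v. (\<lambda>x. G x v) \<in> elementary_smooth" by blast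
  show ?case
    by (intro exI[of _ "\<lambda>x h. f x * G x h + F x h * g x"] conjI allI has_derivative_mult
        elementary_smooth.add elementary_smooth.mult F G mult.hyps)
next
  case (sqrt f)
  then obtain F where F: "\<And>x. (f has_derivative F x) (at x)" "\<And>v. (\<lambda>x. F x v) \<in> elementary_smooth"
    by blast
  let ?f' = "\<lambda>x h. F x h * (inverse (sqrt (f x)) / 2)"
  have "((\<lambda>x. sqrt (f x)) has_derivative ?f' x) (at x)" for x
    using F sqrt.hyps by (intro DERIV_compose_FDERIV DERIV_real_sqrt) auto
  moreover have "(\<lambda>x. ?f' x v) \<in> elementary_smooth" for v
    unfolding divide_inverse
    by (intro elementary_smooth.mult elementary_smooth.inverse_sqrt elementary_smooth.const F sqrt.hyps)
  ultimately show ?case by (intro exI[of _ ?f']) blast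
next
  case (inverse_sqrt f)
  then obtain F where F: "\<And>x. (f has_derivative F x) (at x)" "\<And>v. (\<lambda>x. F x v) \<in> elementary_smooth"
    by blast
  let ?I = "\<lambda>x. inverse (sqrt (f x))"
  let ?f' = "\<lambda>x h. F x h * (?I x * ?I x * ?I x * (-1/2))"
  have "((\<lambda>x. inverse (sqrt (f x))) has_derivative ?f' x) (at x)" for x
    using F inverse_sqrt.hyps
    by (intro DERIV_compose_FDERIV[where f = "\<lambda>y. inverse (sqrt y)"] DERIV_inverse_sqrt) auto
  moreover have "(\<lambda>x. ?f' x v) \<in> elementary_smooth" for v
    by (intro elementary_smooth.mult elementary_smooth.inverse_sqrt elementary_smooth.const F
        inverse_sqrt.hyps)
  ultimately show ?case by (intro exI[of _ ?f']) blast
qed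

lemma C_infinity_if_elementary_smooth:
  assumes "f \<in> elementary_smooth"
  shows "C_infinity f"
  unfolding C_infinity_def
proof (intro exI conjI ballI allI)
  show "f \<in> elementary_smooth" by (fact assms)
  fix g :: "'a \<Rightarrow> real" and x v
  assume "g \<in> elementary_smooth"
  then obtain g' where g': "\<And>x. (g has_derivative g' x) (at x)" "\<And>v. (\<lambda>x. g' x v) \<in> elementary_smooth"
    using elementary_smooth_has_derivative by blast
  then show "g differentiable (at x)" by (auto simp: differentiable_def)
  have "frechet_derivative g (at x) = g' x" for x
    using g' by (simp add: frechet_derivative_at[symmetric])
  then show "(\<lambda>x. frechet_derivative g (at x) v) \<in> elementary_smooth"
    using g' by simp
qed

text \<open>The columns of the \<open>5 \<times> 2\<close> matrix obtained by stacking \<open>\<epsilon> 1\<close> on top of \<open>L\<close>.\<close>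
definition aug_col :: "real \<Rightarrow> real^'n^'m \<Rightarrow> 'n \<Rightarrow> (real^'n) \<times> (real^'m)" where
  "aug_col \<epsilon> L i = (\<epsilon> *\<^sub>R axis i 1, column i L)"

lemma gram_matrix_aug_col:
  "\<epsilon>\<^sup>2 *\<^sub>R mat 1 + transpose L ** L = (\<chi> i j. aug_col \<epsilon> L i \<bullet> aug_col \<epsilon> L j)"
  by (simp add: aug_col_def matrix_mult_transpose_dot_column vec_eq_iff mat_def inner_axis_axis
      power2_eq_square)

lemma psd_matrix2_gram: "psd_matrix (\<chi> i j. v i \<bullet> v j :: real^2^2)"
  using Cauchy_Schwarz_ineq[of "v 1" "v 2"] by (simp add: psd_matrix2_iff inner_commute)

lemma q_eps_formula:
  "q_eps \<epsilon> L = sqrt (trace (\<epsilon>\<^sup>2 *\<^sub>R mat 1 + transpose L ** L)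
                     + 2 * sqrt (det (\<epsilon>\<^sup>2 *\<^sub>R mat 1 + transpose L ** L)))"
  unfolding q_eps_def by (rule trace_psd_sqrt2) (simp add: gram_matrix_aug_col psd_matrix2_gram)

lemma q_eps_eq_trace_norm2: "q_eps \<epsilon> L = trace_norm2 (aug_col \<epsilon> L 1) (aug_col \<epsilon> L 2)"
  unfolding q_eps_formula gram_matrix_aug_col
  by (simp add: trace2 det_2 trace_norm2_def gram_det_def inner_commute power2_eq_square)

lemma gram_det_aug_col:
  fixes L :: "real^2^'m"
  shows "gram_det (aug_col \<epsilon> L 1) (aug_col \<epsilon> L 2) = \<epsilon>^4
     + \<epsilon>\<^sup>2 * (column 1 L \<bullet> column 1 L + column 2 L \<bullet> column 2 L) + gram_det (column 1 L) (column 2 L)"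
  by (simp add: aug_col_def gram_det_def inner_axis_axis power4_eq_xxxx power2_eq_square algebra_simps)

lemma gram_det_columns_pos_if_rank:
  fixes L :: "real^2^'m"
  assumes "rank L = 2"
  shows "0 < gram_det (column 1 L) (column 2 L)"
proof (rule ccontr)
  define l1 l2 where "l1 = column 1 L" "l2 = column 2 L"
  have mult_columns: "L *v x = x$1 *\<^sub>R l1 + x$2 *\<^sub>R l2" for x
    by (simp add: l1_l2_def matrix_mult_sum sum_2 scalar_mult_eq_scaleR)
  assume "\<not> 0 < gram_det (column 1 L) (column 2 L)"
  then have "gram_det l1 l2 = 0" using gram_det_nonneg[of l1 l2] by (simp add: l1_l2_def)
  moreover have "((l2 \<bullet> l2) *\<^sub>R l1 - (l1 \<bullet> l2) *\<^sub>R l2) \<bullet> ((l2 \<bullet> l2) *\<^sub>R l1 - (l1 \<bullet> l2) *\<^sub>R l2)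
      = (l2 \<bullet> l2) * gram_det l1 l2"
    by (simp add: gram_det_def inner_diff_left inner_diff_right inner_commute power2_eq_square algebra_simps)
  ultimately have dependent: "L *v vector [l2 \<bullet> l2, - (l1 \<bullet> l2)] = 0"
    by (simp add: mult_columns)
  obtain x :: "real^2" where "x \<noteq> 0" "L *v x = 0"
  proof (cases "l2 = 0")
    case True
    have "axis 2 1 \<noteq> (0::real^2)" by simp
    moreover have "L *v axis 2 1 = 0" using True by (simp add: l1_l2_def matrix_vector_mult_basis)
    ultimately show ?thesis by (rule that)
  next
    case False
    then show ?thesis
      using that[OF _ dependent] by (metis inner_eq_zero_iff vector_2(1) zero_index)
  qed
  then show False
    using assms matrix_nonfull_linear_equations_eq[of L] by auto
qed

lemma gram_det_aug_col_pos:
  fixes L :: "real^2^'m"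
  assumes "\<epsilon> \<noteq> 0 \<or> rank L = 2"
  shows "0 < gram_det (aug_col \<epsilon> L 1) (aug_col \<epsilon> L 2)"
proof -
  have "0 \<le> \<epsilon>^4" "0 \<le> \<epsilon>\<^sup>2 * (column 1 L \<bullet> column 1 L + column 2 L \<bullet> column 2 L)"
    by simp_all
  moreover have "0 < \<epsilon>^4 \<or> 0 < gram_det (column 1 L) (column 2 L)"
    using assms gram_det_columns_pos_if_rank[of L] by auto
  ultimately show ?thesis
    using gram_det_nonneg[of "column 1 L" "column 2 L"]
    unfolding gram_det_aug_col by linarith
qed

lemma aug_col_convex_combination:
  "aug_col \<epsilon> ((1 - t) *\<^sub>R L1 + t *\<^sub>R L2) i = (1 - t) *\<^sub>R aug_col \<epsilon> L1 i + t *\<^sub>R aug_col \<epsilon> L2 i"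
  by (simp add: aug_col_def column_def vec_eq_iff algebra_simps flip: scaleR_add_left)

lemma convex_on_q_eps_nonzero:
  assumes "\<epsilon> \<noteq> 0"
  shows "convex_on UNIV (q_eps \<epsilon>)"
proof (rule convex_onI)
  fix t :: real and L1 L2 :: "real^2^3"
  assume "0 < t" "t < 1"
  then show "q_eps \<epsilon> ((1 - t) *\<^sub>R L1 + t *\<^sub>R L2) \<le> (1 - t) * q_eps \<epsilon> L1 + t * q_eps \<epsilon> L2"
    using gram_det_aug_col_pos[of \<epsilon> "(1 - t) *\<^sub>R L1 + t *\<^sub>R L2"] assms
    unfolding q_eps_eq_trace_norm2 aug_col_convex_combination
    by (intro trace_norm2_convex_combination) auto
qed simp

lemma convex_on_q_eps: "convex_on UNIV (q_eps \<epsilon>)"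
proof (cases "\<epsilon> = 0")
  case True
  have "isCont (\<lambda>\<epsilon>. q_eps \<epsilon> L) 0" for L
    unfolding q_eps_eq_trace_norm2 trace_norm2_def gram_det_def aug_col_def
    by (intro continuous_intros)
  then have "((\<lambda>\<epsilon>. q_eps \<epsilon> L) \<longlongrightarrow> q_eps 0 L) (at_right 0)" for L
    by (simp add: isCont_def filterlim_at_split)
  moreover have "eventually (\<lambda>\<epsilon>. convex_on UNIV (q_eps \<epsilon>)) (at_right (0::real))"
    using eventually_at_right_less[of 0] by eventually_elim (simp add: convex_on_q_eps_nonzero)
  ultimately show ?thesis
    using True by (intro convex_on_tendsto[of "at_right 0"]) simp_all
qed (rule convex_on_q_eps_nonzero)

lemma column_matrix_mult: "column i (A ** B) = A *v column i B"
  by (simp add: column_def matrix_matrix_mult_def matrix_vector_mult_def vec_eq_iff)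

lemma matrix_eq_0_iff_columns: "M = 0 \<longleftrightarrow> (\<forall>i. column i M = 0)"
  by (auto simp: column_def vec_eq_iff)

lemma aug_col_mat1_plus_scaled_mult:
  fixes A :: "real^'m^'m"
  shows "aug_col \<epsilon> ((mat 1 + t *\<^sub>R A) ** L) i = aug_col \<epsilon> L i + t *\<^sub>R (0, A *v column i L)"
  by (simp add: aug_col_def column_matrix_mult matrix_vector_mult_add_rdistrib
      scaleR_matrix_vector_assoc)

lemma q_eps_stretch_has_derivative:
  fixes L :: "real^2^3" and A :: "real^3^3"
  assumes A: "psd_matrix A" and nondegenerate: "\<epsilon> \<noteq> 0 \<or> rank L = 2"
  obtains D where "((\<lambda>t. q_eps \<epsilon> ((mat 1 + t *\<^sub>R A) ** L)) has_real_derivative D) (at 0)"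
    and "0 \<le> D" and "A ** L \<noteq> 0 \<Longrightarrow> 0 < D"
proof -
  define c d where "c = aug_col \<epsilon> L 1" "d = aug_col \<epsilon> L 2"
  define w1 w2 where "w1 = A *v column 1 L" "w2 = A *v column 2 L"
  define b1 b2 b3 where "b1 = column 1 L \<bullet> w1" "b2 = column 2 L \<bullet> w2" "b3 = column 1 L \<bullet> w2"
  have G: "0 < gram_det c d"
    using gram_det_aug_col_pos[OF nondegenerate] by (simp add: c_d_def)
  have inners: "c \<bullet> (0, w1) = b1" "d \<bullet> (0, w2) = b2" "c \<bullet> (0, w2) = b3" "(0, w1) \<bullet> d = b3"
    using inner_matrix_vector_symmetric[of A "column 1 L" "column 2 L"] A
    by (simp_all add: c_d_def w1_w2_def b1_b2_b3_def aug_col_def psd_matrix_def)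
  define N where "N = b1 * (d \<bullet> d) + (c \<bullet> c) * b2 - 2 * (c \<bullet> d) * b3"
  define D where "D = (b1 + b2 + N / sqrt (gram_det c d)) / trace_norm2 c d"
  have deriv: "((\<lambda>t. q_eps \<epsilon> ((mat 1 + t *\<^sub>R A) ** L)) has_real_derivative D) (at 0)"
    using trace_norm2_line_has_derivative[OF G, of "(0, w1)" "(0, w2)"]
    by (simp add: q_eps_eq_trace_norm2 aug_col_mat1_plus_scaled_mult inners D_def N_def
        flip: c_d_def w1_w2_def) (simp add: algebra_simps)
  have b: "0 \<le> b1" "0 \<le> b2" "b3^2 \<le> b1 * b2"
    using A psd_matrix_cauchy_schwarz[OF A] by (simp_all add: psd_matrix_def b1_b2_b3_def w1_w2_def)
  have "0 \<le> N"
    using mixed_discriminant2_nonneg[of "c \<bullet> c" "d \<bullet> d" "c \<bullet> d" b1 b2 b3] b G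
    by (simp add: N_def gram_det_def mult.commute)
  then have "0 \<le> N / sqrt (gram_det c d)"
    using G by simp
  moreover have "0 < trace_norm2 c d"
    using G by (simp add: trace_norm2_def add_nonneg_pos)
  ultimately have "0 \<le> D" "0 < b1 \<or> 0 < b2 \<Longrightarrow> 0 < D"
    unfolding D_def using b by (auto intro!: divide_nonneg_pos divide_pos_pos)
  moreover have "0 < b1 \<or> 0 < b2" if "A ** L \<noteq> 0"
  proof (rule ccontr)
    assume "\<not> (0 < b1 \<or> 0 < b2)"
    then have "w1 = 0" "w2 = 0"
      using b psd_matrix_quadratic_form_eq_0[OF A] by (simp_all add: b1_b2_b3_def w1_w2_def)
    then have "A ** L = 0"
      by (simp add: matrix_eq_0_iff_columns column_matrix_mult forall_2 w1_w2_def)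
    with that show False ..
  qed
  ultimately show ?thesis using that deriv by blast
qed

lemma C_infinity_q_eps:
  assumes "\<epsilon> \<noteq> 0"
  shows "C_infinity (q_eps \<epsilon>)"
proof -
  have inner: "(\<lambda>L::real^2^3. aug_col \<epsilon> L i \<bullet> aug_col \<epsilon> L j) \<in> elementary_smooth" for i j
  proof -
    have "(\<lambda>L::real^2^3. aug_col \<epsilon> L i \<bullet> aug_col \<epsilon> L j)
        = (\<lambda>L. (\<epsilon> *\<^sub>R axis i 1) \<bullet> (\<epsilon> *\<^sub>R axis j (1::real)) + (\<Sum>k\<in>UNIV. L$k$i * L$k$j))"
      by (simp add: aug_col_def inner_Pair inner_vec_def column_def)
    also have "\<dots> \<in> elementary_smooth"
      by (intro elementary_smooth.add elementary_smooth.const elementary_smooth_sum finite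
          elementary_smooth.mult elementary_smooth.linear
          bounded_linear_compose[OF bounded_linear_vec_nth bounded_linear_vec_nth])
    finally show ?thesis .
  qed
  have gram: "(\<lambda>L::real^2^3. gram_det (aug_col \<epsilon> L 1) (aug_col \<epsilon> L 2)) \<in> elementary_smooth"
    unfolding gram_det_def power2_eq_square by (intro elementary_smooth_diff elementary_smooth.mult inner)
  have "(\<lambda>L::real^2^3. trace_norm2 (aug_col \<epsilon> L 1) (aug_col \<epsilon> L 2)) \<in> elementary_smooth"
    unfolding trace_norm2_def
    using gram_det_aug_col_pos[of \<epsilon>] assms
    by (intro elementary_smooth.sqrt elementary_smooth.add elementary_smooth.mult
        elementary_smooth.const gram inner allI add_nonneg_pos) simp_all
  then show ?thesis
    by (simp add: q_eps_eq_trace_norm2[abs_def] C_infinity_if_elementary_smooth)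
qed

theorem lemmaA4:
  shows "(\<forall>(\<epsilon>::real) (L::real^2^3). \<epsilon> \<ge> 0 \<longrightarrow>
            q_eps \<epsilon> L = sqrt (trace (\<epsilon>\<^sup>2 *\<^sub>R mat 1 + transpose L ** L)
                             + 2 * sqrt (det (\<epsilon>\<^sup>2 *\<^sub>R mat 1 + transpose L ** L))))
       \<and> (\<forall>\<epsilon>::real. \<epsilon> > 0 \<longrightarrow> C_infinity (q_eps \<epsilon>))
       \<and> (\<forall>\<epsilon>::real. \<epsilon> \<ge> 0 \<longrightarrow> convex_on UNIV (q_eps \<epsilon>))
       \<and> (\<forall>(\<epsilon>::real) (L::real^2^3) (A::real^3^3).
            \<epsilon> \<ge> 0 \<longrightarrow> psd_matrix A \<longrightarrow> (\<epsilon> = 0 \<longrightarrow> rank L = 2) \<longrightarrow>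
            ((\<lambda>t. q_eps \<epsilon> ((mat 1 + t *\<^sub>R A) ** L)) differentiable (at 0)
             \<and> deriv (\<lambda>t. q_eps \<epsilon> ((mat 1 + t *\<^sub>R A) ** L)) 0 \<ge> 0
             \<and> (A ** L \<noteq> 0 \<longrightarrow> deriv (\<lambda>t. q_eps \<epsilon> ((mat 1 + t *\<^sub>R A) ** L)) 0 > 0)))"
proof (intro conjI allI impI)
  fix \<epsilon> :: real and L :: "real^2^3"
  show "q_eps \<epsilon> L = sqrt (trace (\<epsilon>\<^sup>2 *\<^sub>R mat 1 + transpose L ** L)
                             + 2 * sqrt (det (\<epsilon>\<^sup>2 *\<^sub>R mat 1 + transpose L ** L)))"
    by (rule q_eps_formula)
next
  fix \<epsilon> :: real
  assume "\<epsilon> > 0"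
  then show "C_infinity (q_eps \<epsilon>)" by (intro C_infinity_q_eps) simp
next
  fix \<epsilon> :: real
  show "convex_on UNIV (q_eps \<epsilon>)" by (rule convex_on_q_eps)
next
  fix \<epsilon> :: real and L :: "real^2^3" and A :: "real^3^3"
  assume "psd_matrix A" "\<epsilon> = 0 \<longrightarrow> rank L = 2"
  then obtain D where deriv: "((\<lambda>t. q_eps \<epsilon> ((mat 1 + t *\<^sub>R A) ** L)) has_real_derivative D) (at 0)"
    and "0 \<le> D" "A ** L \<noteq> 0 \<Longrightarrow> 0 < D"
    using q_eps_stretch_has_derivative[of A \<epsilon> L] by blast
  moreover note DERIV_imp_deriv[OF deriv]
  ultimately show "(\<lambda>t. q_eps \<epsilon> ((mat 1 + t *\<^sub>R A) ** L)) differentiable (at 0)"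
    and "deriv (\<lambda>t. q_eps \<epsilon> ((mat 1 + t *\<^sub>R A) ** L)) 0 \<ge> 0"
    and "A ** L \<noteq> 0 \<Longrightarrow> deriv (\<lambda>t. q_eps \<epsilon> ((mat 1 + t *\<^sub>R A) ** L)) 0 > 0"
    by (auto intro: differentiableI has_field_derivative_imp_has_derivative)
qed

end
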